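(* Let $M$ be a principally Goldie*-lifting right $R$-module. (a) If $M$ is distributive (or a duo module), then $M/N$ is principally Goldie*-lifting for every submodule $N$ of $M$. (b) If $N$ is a projection invariant submodule of $M$, i.e. $eN\subseteq N$ for every idempotent $e=e^2\in\mathrm{End}(M)$, then $M/N$ is principally Goldie*-lifting; in particular $M/A$ is principally Goldie*-lifting for every fully invariant submodule $A$ of $M$.
   Context: $R$ is an associative ring with identity; modules are unital right $R$-modules. $M$ is distributive if for all submodules $A,B,C$, $A+(B\cap C)=(A+B)\cap(A+C)$. A submodule is fully invariant if it is mapped into itself by every endomorphism of $M$; $M$ is a duo module if every submodule is fully invariant. $K\ll L$ means $K$ is small in $L$. For submodules $X,Y$ of a module $L$, $X\,\beta^*\,Y$ means $(X+Y)/X\ll L/X$ and $(X+Y)/Y\ll L/Y$. A module $L$ is principally Goldie*-lifting if for every cyclic submodule $X$ of $L$ there is a direct summand $D$ of $L$ with $X\,\beta^*\,D$. *)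

theory Defs
  imports "HOL-Algebra.Ring"
begin

record ('a, 'r) rmod =
  mcarrier :: "'a set"
  madd :: "'a \<Rightarrow> 'a \<Rightarrow> 'a"
  mzero :: "'a"
  msmul :: "'a \<Rightarrow> 'r \<Rightarrow> 'a"

definition right_module :: "('r, 'b) ring_scheme \<Rightarrow> ('a, 'r) rmod \<Rightarrow> bool" where
  "right_module R M \<longleftrightarrow> ring R \<and>
     mzero M \<in> mcarrier M \<and>
     (\<forall>x\<in>mcarrier M. \<forall>y\<in>mcarrier M. madd M x y \<in> mcarrier M) \<and>
     (\<forall>x\<in>mcarrier M. \<forall>y\<in>mcarrier M. \<forall>z\<in>mcarrier M.
        madd M (madd M x y) z = madd M x (madd M y z)) \<and>
     (\<forall>x\<in>mcarrier M. \<forall>y\<in>mcarrier M. madd M x y = madd M y x) \<and>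
     (\<forall>x\<in>mcarrier M. madd M (mzero M) x = x) \<and>
     (\<forall>x\<in>mcarrier M. \<exists>y\<in>mcarrier M. madd M x y = mzero M) \<and>
     (\<forall>x\<in>mcarrier M. \<forall>r\<in>carrier R. msmul M x r \<in> mcarrier M) \<and>
     (\<forall>x\<in>mcarrier M. \<forall>y\<in>mcarrier M. \<forall>r\<in>carrier R.
        msmul M (madd M x y) r = madd M (msmul M x r) (msmul M y r)) \<and>
     (\<forall>x\<in>mcarrier M. \<forall>r\<in>carrier R. \<forall>s\<in>carrier R.
        msmul M x (r \<oplus>\<^bsub>R\<^esub> s) = madd M (msmul M x r) (msmul M x s)) \<and>
     (\<forall>x\<in>mcarrier M. \<forall>r\<in>carrier R. \<forall>s\<in>carrier R.
        msmul M x (r \<otimes>\<^bsub>R\<^esub> s) = msmul M (msmul M x r) s) \<and>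
     (\<forall>x\<in>mcarrier M. msmul M x \<one>\<^bsub>R\<^esub> = x)"

definition submod :: "('r, 'b) ring_scheme \<Rightarrow> ('a, 'r) rmod \<Rightarrow> 'a set \<Rightarrow> bool" where
  "submod R M N \<longleftrightarrow> N \<subseteq> mcarrier M \<and> mzero M \<in> N \<and>
     (\<forall>x\<in>N. \<forall>y\<in>N. madd M x y \<in> N) \<and>
     (\<forall>x\<in>N. \<forall>r\<in>carrier R. msmul M x r \<in> N)"

definition msum :: "('a, 'r) rmod \<Rightarrow> 'a set \<Rightarrow> 'a set \<Rightarrow> 'a set" where
  "msum M A B = {madd M a b | a b. a \<in> A \<and> b \<in> B}"

definition cyc :: "('r, 'b) ring_scheme \<Rightarrow> ('a, 'r) rmod \<Rightarrow> 'a \<Rightarrow> 'a set" where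
  "cyc R M x = {msmul M x r | r. r \<in> carrier R}"

definition direct_summand :: "('r, 'b) ring_scheme \<Rightarrow> ('a, 'r) rmod \<Rightarrow> 'a set \<Rightarrow> bool" where
  "direct_summand R M D \<longleftrightarrow> submod R M D \<and>
     (\<exists>C. submod R M C \<and> msum M D C = mcarrier M \<and> D \<inter> C = {mzero M})"

definition small :: "('r, 'b) ring_scheme \<Rightarrow> ('a, 'r) rmod \<Rightarrow> 'a set \<Rightarrow> bool" where
  "small R M K \<longleftrightarrow> submod R M K \<and>
     (\<forall>X. submod R M X \<longrightarrow> msum M K X = mcarrier M \<longrightarrow> X = mcarrier M)"

definition mcoset :: "('a, 'r) rmod \<Rightarrow> 'a set \<Rightarrow> 'a \<Rightarrow> 'a set" where
  "mcoset M N x = {madd M x n | n. n \<in> N}"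

definition quot_mod :: "('a, 'r) rmod \<Rightarrow> 'a set \<Rightarrow> ('a set, 'r) rmod" where
  "quot_mod M N =
     \<lparr> mcarrier = mcoset M N ` mcarrier M,
       madd = (\<lambda>A B. msum M A B),
       mzero = N,
       msmul = (\<lambda>A r. {madd M (msmul M a r) n | a n. a \<in> A \<and> n \<in> N}) \<rparr>"

definition quot_sub :: "('a, 'r) rmod \<Rightarrow> 'a set \<Rightarrow> 'a set \<Rightarrow> 'a set set" where
  "quot_sub M N S = mcoset M N ` S"

definition beta_star :: "('r, 'b) ring_scheme \<Rightarrow> ('a, 'r) rmod \<Rightarrow> 'a set \<Rightarrow> 'a set \<Rightarrow> bool" where
  "beta_star R M X Y \<longleftrightarrow>
     small R (quot_mod M X) (quot_sub M X (msum M X Y)) \<and>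
     small R (quot_mod M Y) (quot_sub M Y (msum M X Y))"

definition pg_lifting :: "('r, 'b) ring_scheme \<Rightarrow> ('a, 'r) rmod \<Rightarrow> bool" where
  "pg_lifting R M \<longleftrightarrow>
     (\<forall>x\<in>mcarrier M. \<exists>D. direct_summand R M D \<and> beta_star R M (cyc R M x) D)"

definition mod_distributive :: "('r, 'b) ring_scheme \<Rightarrow> ('a, 'r) rmod \<Rightarrow> bool" where
  "mod_distributive R M \<longleftrightarrow>
     (\<forall>A B C. submod R M A \<longrightarrow> submod R M B \<longrightarrow> submod R M C \<longrightarrow>
        msum M A (B \<inter> C) = msum M A B \<inter> msum M A C)"

text \<open>R-linear endomorphisms of M (only their values on the carrier matter).\<close>
definition endo :: "('r, 'b) ring_scheme \<Rightarrow> ('a, 'r) rmod \<Rightarrow> ('a \<Rightarrow> 'a) \<Rightarrow> bool" where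
  "endo R M f \<longleftrightarrow> (\<forall>x\<in>mcarrier M. f x \<in> mcarrier M) \<and>
     (\<forall>x\<in>mcarrier M. \<forall>y\<in>mcarrier M. f (madd M x y) = madd M (f x) (f y)) \<and>
     (\<forall>x\<in>mcarrier M. \<forall>r\<in>carrier R. f (msmul M x r) = msmul M (f x) r)"

definition fully_invariant :: "('r, 'b) ring_scheme \<Rightarrow> ('a, 'r) rmod \<Rightarrow> 'a set \<Rightarrow> bool" where
  "fully_invariant R M N \<longleftrightarrow> submod R M N \<and> (\<forall>f. endo R M f \<longrightarrow> f ` N \<subseteq> N)"

definition duo_module :: "('r, 'b) ring_scheme \<Rightarrow> ('a, 'r) rmod \<Rightarrow> bool" where
  "duo_module R M \<longleftrightarrow> (\<forall>N. submod R M N \<longrightarrow> fully_invariant R M N)"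

definition projection_invariant :: "('r, 'b) ring_scheme \<Rightarrow> ('a, 'r) rmod \<Rightarrow> 'a set \<Rightarrow> bool" where
  "projection_invariant R M N \<longleftrightarrow> submod R M N \<and>
     (\<forall>e. endo R M e \<longrightarrow> (\<forall>x\<in>mcarrier M. e (e x) = e x) \<longrightarrow> e ` N \<subseteq> N)"

end

theory Submission
  imports Defs
begin

(* Call a submodule N of M compatible with decompositions if
   (D + N) \<inter> (C + N) \<subseteq> N whenever M = D \<oplus> C.  The central proposition
   (quot_pg_lifting) says that for such N the quotient M/N inherits the
   principally Goldie*-lifting property: a cyclic submodule of M/N has the form
   (xR + N)/N; choose a direct summand D of M with xR beta-star D; then (D + N)/N is a
   direct summand of M/N with complement (C + N)/N, and beta-star passes from
   submodules of M to their images in M/N.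
   The theorem follows because every submodule of a distributive module, and
   every projection invariant submodule (apply the projection onto D along C),
   is compatible with decompositions; fully invariant submodules are projection
   invariant, and in a duo module every submodule is fully invariant. *)

locale rmodule =
  fixes R :: "('r, 'b) ring_scheme" and M :: "('a, 'r) rmod"
  assumes RM: "right_module R M"
begin

lemma ringR: "ring R" using RM unfolding right_module_def by auto

lemma zero_c[simp]: "mzero M \<in> mcarrier M" using RM unfolding right_module_def by auto
lemma add_c[simp]: "x \<in> mcarrier M \<Longrightarrow> y \<in> mcarrier M \<Longrightarrow> madd M x y \<in> mcarrier M"
  using RM unfolding right_module_def by auto
lemma add_assoc: "x \<in> mcarrier M \<Longrightarrow> y \<in> mcarrier M \<Longrightarrow> z \<in> mcarrier M \<Longrightarrow>
   madd M (madd M x y) z = madd M x (madd M y z)"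
  using RM unfolding right_module_def by auto
lemma add_comm: "x \<in> mcarrier M \<Longrightarrow> y \<in> mcarrier M \<Longrightarrow> madd M x y = madd M y x"
  using RM unfolding right_module_def by auto
lemma add_lcomm: "x \<in> mcarrier M \<Longrightarrow> y \<in> mcarrier M \<Longrightarrow> z \<in> mcarrier M \<Longrightarrow>
   madd M x (madd M y z) = madd M y (madd M x z)"
  by (metis add_assoc add_comm)
lemmas add_ac = add_assoc add_comm add_lcomm
lemma zero_l[simp]: "x \<in> mcarrier M \<Longrightarrow> madd M (mzero M) x = x"
  using RM unfolding right_module_def by auto
lemma zero_r[simp]: "x \<in> mcarrier M \<Longrightarrow> madd M x (mzero M) = x"
  using zero_l add_comm by simp
lemma inv_ex: "x \<in> mcarrier M \<Longrightarrow> \<exists>y\<in>mcarrier M. madd M x y = mzero M"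
  using RM unfolding right_module_def by meson
lemma smul_c[simp]: "x \<in> mcarrier M \<Longrightarrow> r \<in> carrier R \<Longrightarrow> msmul M x r \<in> mcarrier M"
  using RM unfolding right_module_def by auto
lemma smul_add: "x \<in> mcarrier M \<Longrightarrow> y \<in> mcarrier M \<Longrightarrow> r \<in> carrier R \<Longrightarrow>
   msmul M (madd M x y) r = madd M (msmul M x r) (msmul M y r)"
  using RM unfolding right_module_def by auto
lemma smul_radd: "x \<in> mcarrier M \<Longrightarrow> r \<in> carrier R \<Longrightarrow> s \<in> carrier R \<Longrightarrow>
   msmul M x (r \<oplus>\<^bsub>R\<^esub> s) = madd M (msmul M x r) (msmul M x s)"
  using RM unfolding right_module_def by auto
lemma smul_mult: "x \<in> mcarrier M \<Longrightarrow> r \<in> carrier R \<Longrightarrow> s \<in> carrier R \<Longrightarrow>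
   msmul M x (r \<otimes>\<^bsub>R\<^esub> s) = msmul M (msmul M x r) s"
  using RM unfolding right_module_def by auto
lemma smul_one[simp]: "x \<in> mcarrier M \<Longrightarrow> msmul M x \<one>\<^bsub>R\<^esub> = x"
  using RM unfolding right_module_def by auto

lemma add_left_cancel: assumes "a \<in> mcarrier M" "b \<in> mcarrier M" "c \<in> mcarrier M"
  "madd M a b = madd M a c" shows "b = c"
proof -
  obtain y where y: "y \<in> mcarrier M" "madd M a y = mzero M" using inv_ex assms(1) by blast
  have "madd M y (madd M a b) = madd M y (madd M a c)" using assms by simp
  moreover have "madd M y (madd M a b) = b" using y assms
    by (metis add_assoc add_comm zero_l)
  moreover have "madd M y (madd M a c) = c" using y assms
    by (metis add_assoc add_comm zero_l)
  ultimately show ?thesis by simp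
qed

lemma smul_zero: assumes "x \<in> mcarrier M" shows "msmul M x \<zero>\<^bsub>R\<^esub> = mzero M"
proof -
  interpret ring R by (rule ringR)
  have "madd M (msmul M x \<zero>\<^bsub>R\<^esub>) (mzero M) = madd M (msmul M x \<zero>\<^bsub>R\<^esub>) (msmul M x \<zero>\<^bsub>R\<^esub>)"
    using smul_radd[of x "\<zero>\<^bsub>R\<^esub>" "\<zero>\<^bsub>R\<^esub>"] assms by simp
  then show ?thesis using add_left_cancel assms by (metis smul_c zero_c zero_closed)
qed

definition neg where "neg x = msmul M x (\<ominus>\<^bsub>R\<^esub> \<one>\<^bsub>R\<^esub>)"

lemma neg_c[simp]: "x \<in> mcarrier M \<Longrightarrow> neg x \<in> mcarrier M"
proof -
  interpret ring R by (rule ringR)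
  show "x \<in> mcarrier M \<Longrightarrow> neg x \<in> mcarrier M" unfolding neg_def by simp
qed

lemma neg_r[simp]: assumes "x \<in> mcarrier M" shows "madd M x (neg x) = mzero M"
proof -
  interpret ring R by (rule ringR)
  have "madd M x (neg x) = msmul M x (\<one>\<^bsub>R\<^esub> \<oplus>\<^bsub>R\<^esub> \<ominus>\<^bsub>R\<^esub> \<one>\<^bsub>R\<^esub>)"
    unfolding neg_def using assms smul_radd by simp
  also have "\<one>\<^bsub>R\<^esub> \<oplus>\<^bsub>R\<^esub> \<ominus>\<^bsub>R\<^esub> \<one>\<^bsub>R\<^esub> = \<zero>\<^bsub>R\<^esub>" by (simp add: r_neg)
  finally show ?thesis using assms smul_zero by simp
qed

lemma neg_l[simp]: "x \<in> mcarrier M \<Longrightarrow> madd M (neg x) x = mzero M"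
  using add_comm neg_r neg_c by metis

lemma neg_cancel_l[simp]: "x \<in> mcarrier M \<Longrightarrow> y \<in> mcarrier M \<Longrightarrow> madd M (neg x) (madd M x y) = y"
  by (simp add: add_assoc[symmetric])
lemma neg_cancel_r[simp]: "x \<in> mcarrier M \<Longrightarrow> y \<in> mcarrier M \<Longrightarrow> madd M x (madd M (neg x) y) = y"
  by (simp add: add_assoc[symmetric])

lemma add_eq_rearrange: assumes "a \<in> mcarrier M" "b \<in> mcarrier M" "c \<in> mcarrier M" "e \<in> mcarrier M"
  "madd M a b = madd M c e" shows "madd M a (neg c) = madd M e (neg b)"
proof -
  have "madd M a (neg c) = madd M (madd M a b) (madd M (neg b) (neg c))"
    using assms(1-4) by (simp add: add_assoc)
  also have "\<dots> = madd M (madd M e c) (madd M (neg c) (neg b))"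
    using assms by (simp add: add_comm[of c e] add_comm[of "neg b" "neg c"])
  also have "\<dots> = madd M e (neg b)"
    using assms(1-4) by (simp add: add_assoc)
  finally show ?thesis .
qed

lemma submod_c: "submod R M N \<Longrightarrow> x \<in> N \<Longrightarrow> x \<in> mcarrier M"
  unfolding submod_def by blast
lemma submod_zero: "submod R M N \<Longrightarrow> mzero M \<in> N"
  unfolding submod_def by blast
lemma submod_add: "submod R M N \<Longrightarrow> x \<in> N \<Longrightarrow> y \<in> N \<Longrightarrow> madd M x y \<in> N"
  unfolding submod_def by blast
lemma submod_smul: "submod R M N \<Longrightarrow> x \<in> N \<Longrightarrow> r \<in> carrier R \<Longrightarrow> msmul M x r \<in> N"
  unfolding submod_def by blast
lemma submod_neg: "submod R M N \<Longrightarrow> x \<in> N \<Longrightarrow> neg x \<in> N"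
proof -
  interpret ring R by (rule ringR)
  show "submod R M N \<Longrightarrow> x \<in> N \<Longrightarrow> neg x \<in> N" unfolding submod_def neg_def by simp
qed

lemma submod_carrier: "submod R M (mcarrier M)"
  unfolding submod_def by auto

lemma msum_iff: "z \<in> msum M A B \<longleftrightarrow> (\<exists>a\<in>A. \<exists>b\<in>B. z = madd M a b)"
  unfolding msum_def by auto

lemma msumI: "a \<in> A \<Longrightarrow> b \<in> B \<Longrightarrow> madd M a b \<in> msum M A B"
  unfolding msum_def by auto

lemma submod_msum: assumes "submod R M A" "submod R M B" shows "submod R M (msum M A B)"
proof -
  note c = submod_c[OF assms(1)] submod_c[OF assms(2)]
  have "msum M A B \<subseteq> mcarrier M" using c by (auto simp: msum_iff)
  moreover have "mzero M \<in> msum M A B"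
    using msumI[OF submod_zero[OF assms(1)] submod_zero[OF assms(2)]] by simp
  moreover have "madd M x y \<in> msum M A B" if h: "x \<in> msum M A B" "y \<in> msum M A B" for x y
  proof -
    obtain a b a' b' where ab: "a \<in> A" "b \<in> B" "x = madd M a b" "a' \<in> A" "b' \<in> B" "y = madd M a' b'"
      using h unfolding msum_iff by blast
    then have "madd M x y = madd M (madd M a a') (madd M b b')"
      using c by (simp add: add_ac)
    then show ?thesis using ab msumI submod_add assms by metis
  qed
  moreover have "msmul M x r \<in> msum M A B" if h: "x \<in> msum M A B" "r \<in> carrier R" for x r
  proof -
    obtain a b where ab: "a \<in> A" "b \<in> B" "x = madd M a b"
      using h unfolding msum_iff by blast
    then have "msmul M x r = madd M (msmul M a r) (msmul M b r)"
      using c \<open>r \<in> carrier R\<close> by (simp add: smul_add)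
    then show ?thesis using ab msumI submod_smul assms \<open>r \<in> carrier R\<close> by metis
  qed
  ultimately show ?thesis unfolding submod_def by blast
qed

lemma msum_left: "submod R M B \<Longrightarrow> A \<subseteq> mcarrier M \<Longrightarrow> A \<subseteq> msum M A B"
  unfolding msum_def using submod_zero by force
lemma msum_right: "submod R M A \<Longrightarrow> B \<subseteq> mcarrier M \<Longrightarrow> B \<subseteq> msum M A B"
  unfolding msum_def using submod_zero by force
lemma msum_mono: "A \<subseteq> A' \<Longrightarrow> B \<subseteq> B' \<Longrightarrow> msum M A B \<subseteq> msum M A' B'"
  unfolding msum_def by blast
lemma msum_car: "A \<subseteq> mcarrier M \<Longrightarrow> B \<subseteq> mcarrier M \<Longrightarrow> msum M A B \<subseteq> mcarrier M"
  unfolding msum_def by (auto intro!: add_c simp: subset_iff)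
lemma msum_comm: "A \<subseteq> mcarrier M \<Longrightarrow> B \<subseteq> mcarrier M \<Longrightarrow> msum M A B = msum M B A"
  unfolding msum_def using add_comm by blast

lemma msum_zero: assumes "submod R M N" shows "msum M N {mzero M} = N"
  using submod_c[OF assms] by (force simp: msum_iff)

lemma msum_absorb: assumes "submod R M T" "submod R M N" "submod R M Y" "N \<subseteq> Y"
  shows "msum M (msum M T N) Y = msum M T Y"
proof
  show "msum M (msum M T N) Y \<subseteq> msum M T Y"
  proof
    fix z assume "z \<in> msum M (msum M T N) Y"
    then obtain t n y where e: "t \<in> T" "n \<in> N" "y \<in> Y" "z = madd M (madd M t n) y"
      by (auto simp: msum_iff)
    then have "z = madd M t (madd M n y)" using assms submod_c by (simp add: add_assoc)
    moreover have "madd M n y \<in> Y" using e assms submod_add by blast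
    ultimately show "z \<in> msum M T Y" using e(1) msumI by metis
  qed
  show "msum M T Y \<subseteq> msum M (msum M T N) Y"
    using msum_mono[OF msum_left[OF assms(2)]] assms(1) submod_c by blast
qed

lemma msum_add_both: assumes "submod R M X" "submod R M D" "submod R M N"
  shows "msum M (msum M X N) (msum M D N) = msum M (msum M X D) N"
proof
  show "msum M (msum M X N) (msum M D N) \<subseteq> msum M (msum M X D) N"
  proof
    fix z assume "z \<in> msum M (msum M X N) (msum M D N)"
    then obtain x d n1 n2 where e: "x \<in> X" "d \<in> D" "n1 \<in> N" "n2 \<in> N"
      "z = madd M (madd M x n1) (madd M d n2)" by (auto simp: msum_iff)
    then have "z = madd M (madd M x d) (madd M n1 n2)"
      using assms submod_c by (simp add: add_ac)
    then show "z \<in> msum M (msum M X D) N" using e assms submod_add msumI by metis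
  qed
  show "msum M (msum M X D) N \<subseteq> msum M (msum M X N) (msum M D N)"
  proof
    fix z assume "z \<in> msum M (msum M X D) N"
    then obtain x d n where e: "x \<in> X" "d \<in> D" "n \<in> N" "z = madd M (madd M x d) n"
      by (auto simp: msum_iff)
    then have "z = madd M (madd M x n) (madd M d (mzero M))"
      using assms submod_c by (simp add: add_ac)
    then show "z \<in> msum M (msum M X N) (msum M D N)"
      using e assms submod_zero msumI by metis
  qed
qed

lemma submod_cyc: assumes "x \<in> mcarrier M" shows "submod R M (cyc R M x)"
proof -
  interpret ring R by (rule ringR)
  have "cyc R M x \<subseteq> mcarrier M" using assms unfolding cyc_def by auto
  moreover have "mzero M \<in> cyc R M x" unfolding cyc_def
    using smul_zero[OF assms] zero_closed by (metis (mono_tags, lifting) mem_Collect_eq)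
  moreover have "madd M a b \<in> cyc R M x" if h: "a \<in> cyc R M x" "b \<in> cyc R M x" for a b
  proof -
    obtain r s where "r \<in> carrier R" "s \<in> carrier R" "a = msmul M x r" "b = msmul M x s"
      using h unfolding cyc_def by blast
    then have "madd M a b = msmul M x (r \<oplus>\<^bsub>R\<^esub> s)" "r \<oplus>\<^bsub>R\<^esub> s \<in> carrier R"
      using smul_radd[OF assms] by auto
    then show ?thesis unfolding cyc_def by blast
  qed
  moreover have "msmul M a s \<in> cyc R M x" if h: "a \<in> cyc R M x" "s \<in> carrier R" for a s
  proof -
    obtain r where r: "r \<in> carrier R" "a = msmul M x r" using h(1) unfolding cyc_def by blast
    then have "msmul M a s = msmul M x (r \<otimes>\<^bsub>R\<^esub> s)" "r \<otimes>\<^bsub>R\<^esub> s \<in> carrier R"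
      using smul_mult[OF assms] h(2) by auto
    then show ?thesis unfolding cyc_def by blast
  qed
  ultimately show ?thesis unfolding submod_def by blast
qed

section \<open>The quotient module M/N\<close>

lemma mcoset_iff: "z \<in> mcoset M N x \<longleftrightarrow> (\<exists>n\<in>N. z = madd M x n)"
  unfolding mcoset_def by auto

context fixes N assumes N: "submod R M N"
begin

lemma Nc: "n \<in> N \<Longrightarrow> n \<in> mcarrier M" using submod_c[OF N] .

lemma mcoset_self: "x \<in> mcarrier M \<Longrightarrow> x \<in> mcoset M N x"
  using submod_zero[OF N] by (force simp: mcoset_iff)

lemma mcoset_car: "x \<in> mcarrier M \<Longrightarrow> mcoset M N x \<subseteq> mcarrier M"
  using Nc by (auto simp: mcoset_iff)

lemma mcoset_eq: assumes "x \<in> mcarrier M" "y \<in> mcoset M N x" shows "mcoset M N y = mcoset M N x"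
proof -
  obtain n where n: "n \<in> N" "y = madd M x n" using assms by (auto simp: mcoset_iff)
  show ?thesis
  proof
    show "mcoset M N y \<subseteq> mcoset M N x"
    proof
      fix z assume "z \<in> mcoset M N y"
      then obtain m where m: "m \<in> N" "z = madd M y m" by (auto simp: mcoset_iff)
      then have "z = madd M x (madd M n m)" using n assms Nc by (simp add: add_assoc)
      then show "z \<in> mcoset M N x" using submod_add[OF N n(1) m(1)] by (auto simp: mcoset_iff)
    qed
    show "mcoset M N x \<subseteq> mcoset M N y"
    proof
      fix z assume "z \<in> mcoset M N x"
      then obtain m where m: "m \<in> N" "z = madd M x m" by (auto simp: mcoset_iff)
      then have "z = madd M y (madd M (neg n) m)" using n assms Nc
        by (simp add: add_assoc[symmetric]) (simp add: add_assoc)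
      then show "z \<in> mcoset M N y" using submod_add[OF N submod_neg[OF N n(1)] m(1)]
        by (auto simp: mcoset_iff)
    qed
  qed
qed

lemma mcoset_N: assumes "n \<in> N" shows "mcoset M N n = N"
proof -
  have "mcoset M N (mzero M) = N" using Nc by (auto simp: mcoset_iff)
  moreover have "n \<in> mcoset M N (mzero M)" using assms Nc by (auto simp: mcoset_iff)
  ultimately show ?thesis using mcoset_eq zero_c by metis
qed

lemma mcoset_add: assumes "x \<in> mcarrier M" "y \<in> mcarrier M"
  shows "msum M (mcoset M N x) (mcoset M N y) = mcoset M N (madd M x y)"
proof
  show "msum M (mcoset M N x) (mcoset M N y) \<subseteq> mcoset M N (madd M x y)"
  proof
    fix z assume "z \<in> msum M (mcoset M N x) (mcoset M N y)"
    then obtain n m where nm: "n \<in> N" "m \<in> N" "z = madd M (madd M x n) (madd M y m)"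
      by (auto simp: msum_iff mcoset_iff)
    then have "z = madd M (madd M x y) (madd M n m)" using assms Nc by (simp add: add_ac)
    then show "z \<in> mcoset M N (madd M x y)" using submod_add[OF N nm(1,2)] by (auto simp: mcoset_iff)
  qed
  show "mcoset M N (madd M x y) \<subseteq> msum M (mcoset M N x) (mcoset M N y)"
  proof
    fix z assume "z \<in> mcoset M N (madd M x y)"
    then obtain n where n: "n \<in> N" "z = madd M (madd M x y) n" by (auto simp: mcoset_iff)
    then have "z = madd M (madd M x n) (madd M y (mzero M))" using assms Nc by (simp add: add_ac)
    moreover have "madd M x n \<in> mcoset M N x" using n(1) by (auto simp: mcoset_iff)
    moreover have "madd M y (mzero M) \<in> mcoset M N y" using submod_zero[OF N] by (auto simp: mcoset_iff)
    ultimately show "z \<in> msum M (mcoset M N x) (mcoset M N y)" using msumI by metis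
  qed
qed

lemma q_car: "mcarrier (quot_mod M N) = mcoset M N ` mcarrier M"
  unfolding quot_mod_def by simp
lemma q_zero: "mzero (quot_mod M N) = N"
  unfolding quot_mod_def by simp
lemma q_add: "madd (quot_mod M N) A B = msum M A B"
  unfolding quot_mod_def by simp

lemma q_smul: assumes "x \<in> mcarrier M" "r \<in> carrier R"
  shows "msmul (quot_mod M N) (mcoset M N x) r = mcoset M N (msmul M x r)"
proof -
  have "{madd M (msmul M a r) n | a n. a \<in> mcoset M N x \<and> n \<in> N} = mcoset M N (msmul M x r)"
  proof
    show "{madd M (msmul M a r) n | a n. a \<in> mcoset M N x \<and> n \<in> N} \<subseteq> mcoset M N (msmul M x r)"
    proof
      fix z assume "z \<in> {madd M (msmul M a r) n | a n. a \<in> mcoset M N x \<and> n \<in> N}"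
      then obtain m n where nm: "n \<in> N" "m \<in> N" "z = madd M (msmul M (madd M x m) r) n"
        by (auto simp: mcoset_iff)
      then have "z = madd M (msmul M x r) (madd M (msmul M m r) n)" using assms Nc
        by (simp add: smul_add add_assoc)
      then show "z \<in> mcoset M N (msmul M x r)"
        using submod_add[OF N submod_smul[OF N nm(2) assms(2)] nm(1)] by (auto simp: mcoset_iff)
    qed
    show "mcoset M N (msmul M x r) \<subseteq> {madd M (msmul M a r) n | a n. a \<in> mcoset M N x \<and> n \<in> N}"
    proof
      fix z assume "z \<in> mcoset M N (msmul M x r)"
      then obtain n where "n \<in> N" "z = madd M (msmul M x r) n" by (auto simp: mcoset_iff)
      then show "z \<in> {madd M (msmul M a r) n | a n. a \<in> mcoset M N x \<and> n \<in> N}"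
        using mcoset_self[OF assms(1)] by blast
    qed
  qed
  then show ?thesis unfolding quot_mod_def by simp
qed

lemma quot_module: "right_module R (quot_mod M N)"
proof -
  interpret ring R by (rule ringR)
  have z: "N \<in> mcoset M N ` mcarrier M" using mcoset_N[OF submod_zero[OF N]] by force
  show ?thesis unfolding right_module_def q_car q_zero q_add
  proof (intro conjI ringR z ballI; (elim imageE)?; hypsubst?)
    fix x y assume "x \<in> mcarrier M" "y \<in> mcarrier M"
    then show "msum M (mcoset M N x) (mcoset M N y) \<in> mcoset M N ` mcarrier M"
      by (simp add: mcoset_add)
  next
    fix x y z assume "x \<in> mcarrier M" "y \<in> mcarrier M" "z \<in> mcarrier M"
    then show "msum M (msum M (mcoset M N x) (mcoset M N y)) (mcoset M N z) =
       msum M (mcoset M N x) (msum M (mcoset M N y) (mcoset M N z))"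
      by (simp add: mcoset_add add_assoc)
  next
    fix x y assume "x \<in> mcarrier M" "y \<in> mcarrier M"
    then show "msum M (mcoset M N x) (mcoset M N y) = msum M (mcoset M N y) (mcoset M N x)"
      by (simp add: mcoset_add add_comm)
  next
    fix x assume "x \<in> mcarrier M"
    then show "msum M N (mcoset M N x) = mcoset M N x"
      using mcoset_add[of "mzero M" x] mcoset_N[OF submod_zero[OF N]] by simp
  next
    fix x assume "x \<in> mcarrier M"
    then show "\<exists>y\<in>mcoset M N ` mcarrier M. msum M (mcoset M N x) y = N"
      using mcoset_add[of x "neg x"] mcoset_N[OF submod_zero[OF N]]
      by (intro bexI[of _ "mcoset M N (neg x)"]) auto
  next
    fix x r assume "x \<in> mcarrier M" "r \<in> carrier R"
    then show "msmul (quot_mod M N) (mcoset M N x) r \<in> mcoset M N ` mcarrier M"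
      by (simp add: q_smul)
  next
    fix x y r assume "x \<in> mcarrier M" "y \<in> mcarrier M" "r \<in> carrier R"
    then show "msmul (quot_mod M N) (msum M (mcoset M N x) (mcoset M N y)) r =
          msum M (msmul (quot_mod M N) (mcoset M N x) r) (msmul (quot_mod M N) (mcoset M N y) r)"
      by (simp add: q_smul mcoset_add smul_add)
  next
    fix x r s assume "x \<in> mcarrier M" "r \<in> carrier R" "s \<in> carrier R"
    then show "msmul (quot_mod M N) (mcoset M N x) (r \<oplus>\<^bsub>R\<^esub> s) =
       msum M (msmul (quot_mod M N) (mcoset M N x) r) (msmul (quot_mod M N) (mcoset M N x) s)"
      by (simp add: q_smul mcoset_add smul_radd)
  next
    fix x r s assume "x \<in> mcarrier M" "r \<in> carrier R" "s \<in> carrier R"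
    then show "msmul (quot_mod M N) (mcoset M N x) (r \<otimes>\<^bsub>R\<^esub> s) =
       msmul (quot_mod M N) (msmul (quot_mod M N) (mcoset M N x) r) s"
      by (simp add: q_smul smul_mult)
  next
    fix x assume "x \<in> mcarrier M"
    then show "msmul (quot_mod M N) (mcoset M N x) \<one>\<^bsub>R\<^esub> = mcoset M N x"
      by (simp add: q_smul)
  qed
qed

section \<open>Correspondence between submodules of M/N and submodules of M containing N\<close>

text \<open>A subset is N-saturated if it is a union of cosets of N; such sets are
  determined by their image in M/N.\<close>
definition saturated where
  "saturated S \<longleftrightarrow> S \<subseteq> mcarrier M \<and> (\<forall>s\<in>S. \<forall>n\<in>N. madd M s n \<in> S)"

lemma saturated_submod: "submod R M S \<Longrightarrow> N \<subseteq> S \<Longrightarrow> saturated S"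
  unfolding saturated_def using submod_c submod_add by blast

lemma qs_iff: "C \<in> quot_sub M N S \<longleftrightarrow> (\<exists>s\<in>S. C = mcoset M N s)"
  unfolding quot_sub_def by auto

lemma mem_coset_saturated: "saturated T \<Longrightarrow> t \<in> T \<Longrightarrow> z \<in> mcoset M N t \<Longrightarrow> z \<in> T"
  unfolding saturated_def by (auto simp: mcoset_iff)

lemma qs_mono_rev: assumes "saturated T" "S \<subseteq> mcarrier M" "quot_sub M N S \<subseteq> quot_sub M N T"
  shows "S \<subseteq> T"
proof
  fix s assume s: "s \<in> S"
  have "mcoset M N s \<in> quot_sub M N T" using s assms(3) unfolding quot_sub_def by blast
  then obtain t where t: "t \<in> T" "mcoset M N s = mcoset M N t" by (auto simp: qs_iff)
  have "s \<in> mcoset M N t" using t(2) mcoset_self s assms(2) by blast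
  then show "s \<in> T" using mem_coset_saturated assms(1) t(1) by blast
qed

lemma qs_inj: "saturated S \<Longrightarrow> saturated T \<Longrightarrow> quot_sub M N S = quot_sub M N T \<Longrightarrow> S = T"
  using qs_mono_rev unfolding saturated_def by (metis subset_antisym subset_refl)

lemma qs_Int: assumes "saturated S" "saturated T"
  shows "quot_sub M N S \<inter> quot_sub M N T = quot_sub M N (S \<inter> T)"
proof
  show "quot_sub M N S \<inter> quot_sub M N T \<subseteq> quot_sub M N (S \<inter> T)"
  proof
    fix C assume "C \<in> quot_sub M N S \<inter> quot_sub M N T"
    then obtain s t where st: "s \<in> S" "t \<in> T" "C = mcoset M N s" "C = mcoset M N t"
      by (auto simp: qs_iff)
    have "s \<in> mcoset M N t" using st mcoset_self assms unfolding saturated_def by blast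
    then have "s \<in> T" using mem_coset_saturated assms(2) st(2) by blast
    then show "C \<in> quot_sub M N (S \<inter> T)" using st by (auto simp: qs_iff)
  qed
qed (auto simp: qs_iff)

lemma qs_msum: assumes "S \<subseteq> mcarrier M" "T \<subseteq> mcarrier M"
  shows "msum (quot_mod M N) (quot_sub M N S) (quot_sub M N T) = quot_sub M N (msum M S T)"
proof -
  have "msum (quot_mod M N) (quot_sub M N S) (quot_sub M N T) =
      {msum M (mcoset M N s) (mcoset M N t) | s t. s \<in> S \<and> t \<in> T}"
    unfolding msum_def[of "quot_mod M N"] q_add quot_sub_def by blast
  also have "\<dots> = {mcoset M N (madd M s t) | s t. s \<in> S \<and> t \<in> T}"
    using mcoset_add assms by blast
  also have "\<dots> = quot_sub M N (msum M S T)"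
    unfolding quot_sub_def msum_def by blast
  finally show ?thesis .
qed

lemma q_car': "mcarrier (quot_mod M N) = quot_sub M N (mcarrier M)"
  using q_car unfolding quot_sub_def .

lemma submod_qs: assumes "submod R M S" "N \<subseteq> S"
  shows "submod R (quot_mod M N) (quot_sub M N S)"
proof -
  have Sc: "S \<subseteq> mcarrier M" using submod_c assms(1) by blast
  have "quot_sub M N S \<subseteq> mcarrier (quot_mod M N)" using q_car' Sc unfolding quot_sub_def by blast
  moreover have "mzero (quot_mod M N) \<in> quot_sub M N S"
    using q_zero mcoset_N[OF submod_zero[OF N]] submod_zero[OF N] assms(2)
    unfolding quot_sub_def by force
  moreover have "\<forall>x\<in>quot_sub M N S. \<forall>y\<in>quot_sub M N S. madd (quot_mod M N) x y \<in> quot_sub M N S"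
    unfolding quot_sub_def q_add using mcoset_add Sc submod_add[OF assms(1)]
    by (auto simp: subset_iff)
  moreover have "\<forall>x\<in>quot_sub M N S. \<forall>r\<in>carrier R. msmul (quot_mod M N) x r \<in> quot_sub M N S"
    unfolding quot_sub_def using q_smul Sc submod_smul[OF assms(1)]
    by (auto simp: subset_iff)
  ultimately show ?thesis unfolding submod_def by blast
qed

lemma submod_q_rev: assumes "submod R (quot_mod M N) Y'"
  shows "submod R M (\<Union>Y') \<and> N \<subseteq> \<Union>Y' \<and> Y' = quot_sub M N (\<Union>Y')"
proof -
  have Y'c: "Y' \<subseteq> mcoset M N ` mcarrier M" using assms q_car unfolding submod_def by blast
  have rep: "y \<in> mcarrier M \<and> C = mcoset M N y" if h: "C \<in> Y'" "y \<in> C" for C y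
  proof -
    obtain x where x: "x \<in> mcarrier M" "C = mcoset M N x" using Y'c h(1) by blast
    then show ?thesis using h(2) mcoset_car mcoset_eq by blast
  qed
  have NY: "N \<subseteq> \<Union>Y'" using assms q_zero unfolding submod_def by (metis Union_upper)
  have closed_add: "madd M x y \<in> \<Union>Y'" if h: "x \<in> \<Union>Y'" "y \<in> \<Union>Y'" for x y
  proof -
    obtain C D where CD: "C \<in> Y'" "D \<in> Y'" "x \<in> C" "y \<in> D" using h by blast
    then have e: "C = mcoset M N x" "D = mcoset M N y" "x \<in> mcarrier M" "y \<in> mcarrier M"
      using rep by blast+
    have "madd (quot_mod M N) C D \<in> Y'" using CD(1,2) assms unfolding submod_def by blast
    then have "mcoset M N (madd M x y) \<in> Y'" using e q_add mcoset_add by simp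
    then show ?thesis using mcoset_self e add_c by blast
  qed
  have closed_smul: "msmul M x r \<in> \<Union>Y'" if h: "x \<in> \<Union>Y'" "r \<in> carrier R" for x r
  proof -
    obtain C where CD: "C \<in> Y'" "x \<in> C" using h by blast
    then have e: "C = mcoset M N x" "x \<in> mcarrier M" using rep by blast+
    have "msmul (quot_mod M N) C r \<in> Y'" using CD(1) assms h(2) unfolding submod_def by blast
    then have "mcoset M N (msmul M x r) \<in> Y'" using e q_smul h(2) by simp
    then show ?thesis using mcoset_self e smul_c h(2) by blast
  qed
  have "submod R M (\<Union>Y')"
    unfolding submod_def using rep NY submod_zero[OF N] closed_add closed_smul by blast
  moreover have "Y' = quot_sub M N (\<Union>Y')"
    using rep mcoset_self Y'c by (fastforce simp: qs_iff)
  ultimately show ?thesis using NY by blast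
qed

lemma qs_sum_eq_carrier: assumes "submod R M S" "submod R M Y" "N \<subseteq> Y"
  shows "msum (quot_mod M N) (quot_sub M N S) (quot_sub M N Y) = mcarrier (quot_mod M N)
     \<longleftrightarrow> msum M S Y = mcarrier M"
proof -
  have c: "S \<subseteq> mcarrier M" "Y \<subseteq> mcarrier M" using assms submod_c by blast+
  have "saturated (msum M S Y)"
    using saturated_submod submod_msum[OF assms(1,2)] assms(3) msum_right[OF assms(1) c(2)] by blast
  moreover have "saturated (mcarrier M)" using saturated_submod[OF submod_carrier] Nc by blast
  ultimately show ?thesis using qs_msum[OF c] q_car' qs_inj by metis
qed

lemma small_char: assumes "submod R M S" "N \<subseteq> S"
  shows "small R (quot_mod M N) (quot_sub M N S) \<longleftrightarrow>
    (\<forall>Y. submod R M Y \<longrightarrow> N \<subseteq> Y \<longrightarrow> msum M S Y = mcarrier M \<longrightarrow> Y = mcarrier M)"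
proof
  assume sm: "small R (quot_mod M N) (quot_sub M N S)"
  show "\<forall>Y. submod R M Y \<longrightarrow> N \<subseteq> Y \<longrightarrow> msum M S Y = mcarrier M \<longrightarrow> Y = mcarrier M"
  proof (intro allI impI)
    fix Y assume Y: "submod R M Y" "N \<subseteq> Y" "msum M S Y = mcarrier M"
    then have "quot_sub M N Y = quot_sub M N (mcarrier M)"
      using sm submod_qs[OF Y(1,2)] qs_sum_eq_carrier[OF assms(1) Y(1,2)] q_car'
      unfolding small_def by simp
    moreover have "saturated (mcarrier M)" using saturated_submod[OF submod_carrier] Nc by blast
    ultimately show "Y = mcarrier M" using qs_inj saturated_submod[OF Y(1,2)] by blast
  qed
next
  assume H: "\<forall>Y. submod R M Y \<longrightarrow> N \<subseteq> Y \<longrightarrow> msum M S Y = mcarrier M \<longrightarrow> Y = mcarrier M"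
  show "small R (quot_mod M N) (quot_sub M N S)"
    unfolding small_def
  proof (intro conjI allI impI)
    show "submod R (quot_mod M N) (quot_sub M N S)" using submod_qs assms .
    fix Y' assume Y': "submod R (quot_mod M N) Y'"
      "msum (quot_mod M N) (quot_sub M N S) Y' = mcarrier (quot_mod M N)"
    define Y where "Y = \<Union>Y'"
    have Y: "submod R M Y" "N \<subseteq> Y" "Y' = quot_sub M N Y" using submod_q_rev[OF Y'(1)] Y_def by auto
    then have "msum M S Y = mcarrier M" using Y'(2) qs_sum_eq_carrier[OF assms(1) Y(1,2)] by simp
    then have "Y = mcarrier M" using H Y by blast
    then show "Y' = mcarrier (quot_mod M N)" using Y(3) q_car' by simp
  qed
qed

end

section \<open>Images of cyclic submodules and of \<beta>* in a quotient\<close>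

lemma cyc_quot: assumes N: "submod R M N" and x: "x \<in> mcarrier M"
  shows "cyc R (quot_mod M N) (mcoset M N x) = quot_sub M N (msum M (cyc R M x) N)"
proof
  show "cyc R (quot_mod M N) (mcoset M N x) \<subseteq> quot_sub M N (msum M (cyc R M x) N)"
  proof
    fix C assume "C \<in> cyc R (quot_mod M N) (mcoset M N x)"
    then obtain r where r: "r \<in> carrier R" "C = mcoset M N (msmul M x r)"
      unfolding cyc_def using q_smul[OF N x] by auto
    have "madd M (msmul M x r) (mzero M) \<in> msum M (cyc R M x) N"
      using r(1) submod_zero[OF N] unfolding cyc_def by (intro msumI) auto
    then show "C \<in> quot_sub M N (msum M (cyc R M x) N)"
      using r x unfolding quot_sub_def by force
  qed
  show "quot_sub M N (msum M (cyc R M x) N) \<subseteq> cyc R (quot_mod M N) (mcoset M N x)"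
  proof
    fix C assume "C \<in> quot_sub M N (msum M (cyc R M x) N)"
    then obtain r n where rn: "r \<in> carrier R" "n \<in> N" "C = mcoset M N (madd M (msmul M x r) n)"
      unfolding quot_sub_def cyc_def msum_def by auto
    have "madd M (msmul M x r) n \<in> mcoset M N (msmul M x r)" using rn by (auto simp: mcoset_iff)
    then have "C = mcoset M N (msmul M x r)" using rn mcoset_eq[OF N] x by simp
    then show "C \<in> cyc R (quot_mod M N) (mcoset M N x)"
      unfolding cyc_def using q_smul[OF N x] rn(1) by auto
  qed
qed

text \<open>If T/W is small in M/W, then the image of T is small modulo the image of W
  in M/N; this is the smallness half of the passage of \<beta>* to quotients.\<close>
lemma small_quot_image:
  assumes N: "submod R M N" and W: "submod R M W" and T: "submod R M T" "W \<subseteq> T"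
    and sm: "small R (quot_mod M W) (quot_sub M W T)"
  shows "small R (quot_mod (quot_mod M N) (quot_sub M N (msum M W N)))
            (quot_sub (quot_mod M N) (quot_sub M N (msum M W N)) (quot_sub M N (msum M T N)))"
proof -
  interpret L: rmodule R "quot_mod M N" using quot_module[OF N] by unfold_locales
  have Nc: "N \<subseteq> mcarrier M" using submod_c N by blast
  have WN: "submod R M (msum M W N)" "N \<subseteq> msum M W N" "W \<subseteq> msum M W N"
    using submod_msum[OF W N] msum_right[OF W Nc] msum_left[OF N] submod_c W by auto
  have TN: "submod R M (msum M T N)" "N \<subseteq> msum M T N"
    using submod_msum[OF T(1) N] msum_right[OF T(1) Nc] by auto
  have WT: "quot_sub M N (msum M W N) \<subseteq> quot_sub M N (msum M T N)"
    using msum_mono[OF T(2)] unfolding quot_sub_def by blast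
  have "Y' = mcarrier (quot_mod M N)"
    if Y': "submod R (quot_mod M N) Y'" "quot_sub M N (msum M W N) \<subseteq> Y'"
      "msum (quot_mod M N) (quot_sub M N (msum M T N)) Y' = mcarrier (quot_mod M N)" for Y'
  proof -
    define Y where "Y = \<Union>Y'"
    have Y: "submod R M Y" "N \<subseteq> Y" "Y' = quot_sub M N Y" using submod_q_rev[OF N Y'(1)] Y_def by auto
    have "msum M (msum M T N) Y = mcarrier M" using Y'(3) Y qs_sum_eq_carrier[OF N TN(1)] by simp
    then have "msum M T Y = mcarrier M" using msum_absorb[OF T(1) N Y(1,2)] by simp
    moreover have "W \<subseteq> Y"
      using qs_mono_rev[OF N saturated_submod[OF N Y(1,2)]] WN submod_c Y'(2) Y(3) by blast
    ultimately have "Y = mcarrier M" using sm small_char[OF W T] Y(1) by blast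
    then show ?thesis using Y(3) q_car'[OF N] by simp
  qed
  then show ?thesis
    using L.small_char[OF submod_qs[OF N WN(1,2)] submod_qs[OF N TN] WT] by blast
qed

lemma beta_star_quot: assumes N: "submod R M N" and X: "submod R M X" and D: "submod R M D"
    and XD: "beta_star R M X D"
  shows "beta_star R (quot_mod M N) (quot_sub M N (msum M X N)) (quot_sub M N (msum M D N))"
proof -
  have c: "msum M X N \<subseteq> mcarrier M" "msum M D N \<subseteq> mcarrier M"
    using submod_msum N X D submod_c by blast+
  have sum: "msum (quot_mod M N) (quot_sub M N (msum M X N)) (quot_sub M N (msum M D N))
      = quot_sub M N (msum M (msum M X D) N)"
    using qs_msum[OF N c] msum_add_both[OF X D N] by simp
  have XDc: "X \<subseteq> mcarrier M" "D \<subseteq> mcarrier M" using X D submod_c by blast+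
  have T: "submod R M (msum M X D)" "X \<subseteq> msum M X D" "D \<subseteq> msum M X D"
    using submod_msum[OF X D] msum_left[OF D XDc(1)] msum_right[OF X XDc(2)] by auto
  show ?thesis
    using XD small_quot_image[OF N X T(1,2)] small_quot_image[OF N D T(1,3)]
    unfolding beta_star_def sum by blast
qed

end

section \<open>Quotients by submodules compatible with decompositions\<close>

text \<open>N is compatible with direct decompositions if (D + N) \<inter> (C + N) \<subseteq> N for
  every decomposition M = D \<oplus> C (the reverse inclusion always holds).\<close>
definition respects_decompositions :: "('r, 'b) ring_scheme \<Rightarrow> ('a, 'r) rmod \<Rightarrow> 'a set \<Rightarrow> bool" where
  "respects_decompositions R M N \<longleftrightarrow>
     (\<forall>D C. submod R M D \<longrightarrow> submod R M C \<longrightarrow> msum M D C = mcarrier M \<longrightarrow>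
        D \<inter> C = {mzero M} \<longrightarrow> msum M D N \<inter> msum M C N \<subseteq> N)"

context rmodule
begin

lemma direct_summand_quot:
  assumes N: "submod R M N" and D: "submod R M D" and C: "submod R M C"
    and DC: "msum M D C = mcarrier M" "D \<inter> C = {mzero M}"
    and H: "msum M D N \<inter> msum M C N \<subseteq> N"
  shows "direct_summand R (quot_mod M N) (quot_sub M N (msum M D N))"
  unfolding direct_summand_def
proof (intro conjI exI[of _ "quot_sub M N (msum M C N)"])
  have Nc: "N \<subseteq> mcarrier M" using submod_c N by blast
  have DN: "submod R M (msum M D N)" "N \<subseteq> msum M D N" "D \<subseteq> msum M D N"
    using submod_msum[OF D N] msum_right[OF D Nc] msum_left[OF N] D submod_c by auto
  have CN: "submod R M (msum M C N)" "N \<subseteq> msum M C N" "C \<subseteq> msum M C N"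
    using submod_msum[OF C N] msum_right[OF C Nc] msum_left[OF N] C submod_c by auto
  show "submod R (quot_mod M N) (quot_sub M N (msum M D N))" using submod_qs[OF N DN(1,2)] .
  show "submod R (quot_mod M N) (quot_sub M N (msum M C N))" using submod_qs[OF N CN(1,2)] .
  have "msum M (msum M D N) (msum M C N) = mcarrier M"
    using msum_car msum_mono[OF DN(3) CN(3)] DC(1) DN(1) CN(1) submod_c
    by (metis subsetI subset_antisym)
  then show "msum (quot_mod M N) (quot_sub M N (msum M D N)) (quot_sub M N (msum M C N))
      = mcarrier (quot_mod M N)"
    using qs_sum_eq_carrier[OF N DN(1) CN(1,2)] by simp
  have "msum M D N \<inter> msum M C N = N" using H DN(2) CN(2) by blast
  then have "quot_sub M N (msum M D N) \<inter> quot_sub M N (msum M C N) = quot_sub M N N"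
    using qs_Int[OF N saturated_submod[OF N DN(1,2)] saturated_submod[OF N CN(1,2)]] by simp
  also have "\<dots> = {N}" unfolding quot_sub_def using mcoset_N[OF N] submod_zero[OF N] by blast
  finally show "quot_sub M N (msum M D N) \<inter> quot_sub M N (msum M C N) = {mzero (quot_mod M N)}"
    using q_zero[OF N] by simp
qed

lemma quot_pg_lifting:
  assumes pg: "pg_lifting R M" and N: "submod R M N" and H: "respects_decompositions R M N"
  shows "pg_lifting R (quot_mod M N)"
  unfolding pg_lifting_def
proof
  fix c assume "c \<in> mcarrier (quot_mod M N)"
  then obtain x where x: "x \<in> mcarrier M" "c = mcoset M N x" using q_car[OF N] by auto
  obtain D where D: "direct_summand R M D" "beta_star R M (cyc R M x) D"
    using pg x(1) unfolding pg_lifting_def by blast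
  obtain C where C: "submod R M D" "submod R M C" "msum M D C = mcarrier M" "D \<inter> C = {mzero M}"
    using D(1) unfolding direct_summand_def by blast
  have "direct_summand R (quot_mod M N) (quot_sub M N (msum M D N))"
    using direct_summand_quot[OF N C] H C unfolding respects_decompositions_def by blast
  moreover have "beta_star R (quot_mod M N) (cyc R (quot_mod M N) c) (quot_sub M N (msum M D N))"
    using beta_star_quot[OF N submod_cyc[OF x(1)] C(1) D(2)] cyc_quot[OF N x(1)] x(2) by simp
  ultimately show "\<exists>D. direct_summand R (quot_mod M N) D \<and>
      beta_star R (quot_mod M N) (cyc R (quot_mod M N) c) D" by blast
qed

section \<open>Submodules compatible with decompositions\<close>

text \<open>In a distributive module: (D + N) \<inter> (C + N) = N + (D \<inter> C) = N.\<close>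
lemma distributive_respects_decompositions:
  assumes "mod_distributive R M" "submod R M N"
  shows "respects_decompositions R M N"
  unfolding respects_decompositions_def
proof (intro allI impI)
  fix D C assume DC: "submod R M D" "submod R M C" "msum M D C = mcarrier M" "D \<inter> C = {mzero M}"
  have c: "N \<subseteq> mcarrier M" "D \<subseteq> mcarrier M" "C \<subseteq> mcarrier M" using assms DC submod_c by blast+
  have "msum M N (D \<inter> C) = msum M N D \<inter> msum M N C"
    using assms DC unfolding mod_distributive_def by blast
  then show "msum M D N \<inter> msum M C N \<subseteq> N" using msum_zero[OF assms(2)] DC(4) msum_comm c by simp
qed

context fixes D C
  assumes D: "submod R M D" and C: "submod R M C"
    and DC: "msum M D C = mcarrier M" "D \<inter> C = {mzero M}"
begin

definition proj where "proj y = (SOME d. d \<in> D \<and> (\<exists>c\<in>C. y = madd M d c))"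

lemma direct_sum_unique:
  assumes "d \<in> D" "c \<in> C" "d' \<in> D" "c' \<in> C" "madd M d c = madd M d' c'"
  shows "d = d'"
proof -
  have cc: "d \<in> mcarrier M" "c \<in> mcarrier M" "d' \<in> mcarrier M" "c' \<in> mcarrier M"
    using assms D C submod_c by blast+
  have "madd M d (neg d') = madd M c' (neg c)" using add_eq_rearrange[OF cc assms(5)] .
  moreover have "madd M d (neg d') \<in> D" using submod_add[OF D assms(1) submod_neg[OF D assms(3)]] .
  moreover have "madd M c' (neg c) \<in> C" using submod_add[OF C assms(4) submod_neg[OF C assms(2)]] .
  ultimately have "madd M d (neg d') = mzero M" using DC(2) by auto
  then have "madd M (madd M d (neg d')) d' = d'" using cc by simp
  then show "d = d'" using cc by (simp add: add_assoc)
qed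

lemma proj_decomp: assumes "y \<in> mcarrier M" shows "proj y \<in> D \<and> (\<exists>c\<in>C. y = madd M (proj y) c)"
proof -
  have "y \<in> msum M D C" using assms DC(1) by simp
  then have "\<exists>d. d \<in> D \<and> (\<exists>c\<in>C. y = madd M d c)" by (auto simp: msum_iff)
  then show ?thesis unfolding proj_def by (rule someI_ex)
qed

lemma proj_eq: assumes "d \<in> D" "c \<in> C" shows "proj (madd M d c) = d"
proof -
  have "madd M d c \<in> mcarrier M" using assms D C submod_c by simp
  then obtain c' where "proj (madd M d c) \<in> D" "c' \<in> C" "madd M d c = madd M (proj (madd M d c)) c'"
    using proj_decomp by blast
  then show ?thesis using direct_sum_unique assms by metis
qed

lemma proj_endo: "endo R M proj"
  unfolding endo_def
proof (intro conjI ballI)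
  fix x assume "x \<in> mcarrier M" then show "proj x \<in> mcarrier M" using proj_decomp D submod_c by blast
next
  fix x y assume xy: "x \<in> mcarrier M" "y \<in> mcarrier M"
  obtain cx where cx: "proj x \<in> D" "cx \<in> C" "x = madd M (proj x) cx" using proj_decomp xy(1) by blast
  obtain cy where cy: "proj y \<in> D" "cy \<in> C" "y = madd M (proj y) cy" using proj_decomp xy(2) by blast
  have cc: "proj x \<in> mcarrier M" "proj y \<in> mcarrier M" "cx \<in> mcarrier M" "cy \<in> mcarrier M"
    using cx cy D C submod_c by blast+
  have "madd M (madd M (proj x) cx) (madd M (proj y) cy) = madd M (madd M (proj x) (proj y)) (madd M cx cy)"
    using cc by (simp add: add_ac)
  then have "madd M x y = madd M (madd M (proj x) (proj y)) (madd M cx cy)"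
    by (simp only: cx(3)[symmetric] cy(3)[symmetric])
  then show "proj (madd M x y) = madd M (proj x) (proj y)"
    using proj_eq submod_add[OF D cx(1) cy(1)] submod_add[OF C cx(2) cy(2)] by simp
next
  fix x r assume xr: "x \<in> mcarrier M" "r \<in> carrier R"
  obtain cx where cx: "proj x \<in> D" "cx \<in> C" "x = madd M (proj x) cx" using proj_decomp xr(1) by blast
  then have "msmul M x r = madd M (msmul M (proj x) r) (msmul M cx r)"
    using D C submod_c xr(2) smul_add by metis
  then show "proj (msmul M x r) = msmul M (proj x) r"
    using proj_eq submod_smul[OF D cx(1) xr(2)] submod_smul[OF C cx(2) xr(2)] by simp
qed

lemma proj_idem: "x \<in> mcarrier M \<Longrightarrow> proj (proj x) = proj x"
  using proj_decomp proj_eq[of "proj x" "mzero M"] submod_zero[OF C] D submod_c by fastforce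

end

text \<open>A projection invariant N is compatible with decompositions: if d + n1 = c + n2
  with d \<in> D, c \<in> C and n1, n2 \<in> N, the projection onto D maps n2 - n1 = d - c \<in> N
  to d, so d \<in> N.\<close>
lemma projection_invariant_respects_decompositions:
  assumes P: "projection_invariant R M N"
  shows "respects_decompositions R M N"
  unfolding respects_decompositions_def
proof (intro allI impI subsetI)
  fix D C z assume D: "submod R M D" and C: "submod R M C"
    and DC: "msum M D C = mcarrier M" "D \<inter> C = {mzero M}"
    and z: "z \<in> msum M D N \<inter> msum M C N"
  have N: "submod R M N" using P unfolding projection_invariant_def by blast
  obtain d n1 c n2 where h: "d \<in> D" "n1 \<in> N" "c \<in> C" "n2 \<in> N"
    "z = madd M d n1" "z = madd M c n2" using z by (auto simp: msum_iff)
  have cc: "d \<in> mcarrier M" "n1 \<in> mcarrier M" "c \<in> mcarrier M" "n2 \<in> mcarrier M"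
    using h D C N submod_c by blast+
  have m: "madd M d (neg c) = madd M n2 (neg n1)" using add_eq_rearrange[OF cc] h(5,6) by simp
  have "proj D C ` N \<subseteq> N"
    using P proj_endo[OF D C DC] proj_idem[OF D C DC] unfolding projection_invariant_def by blast
  moreover have "proj D C (madd M n2 (neg n1)) = d"
    using proj_eq[OF D C DC h(1) submod_neg[OF C h(3)]] m by simp
  ultimately have "d \<in> N" using submod_add[OF N h(4) submod_neg[OF N h(2)]] by blast
  then show "z \<in> N" using h submod_add[OF N] by blast
qed

end

lemma fully_invariant_projection_invariant:
  "fully_invariant R M A \<Longrightarrow> projection_invariant R M A"
  unfolding fully_invariant_def projection_invariant_def by blast

theorem corollary3p11:
  fixes R :: "('r, 'b) ring_scheme" and M :: "('a, 'r) rmod"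
  assumes "right_module R M"
    and "pg_lifting R M"
  shows "((mod_distributive R M \<or> duo_module R M) \<longrightarrow>
            (\<forall>N. submod R M N \<longrightarrow> pg_lifting R (quot_mod M N)))
       \<and> (\<forall>N. projection_invariant R M N \<longrightarrow> pg_lifting R (quot_mod M N))
       \<and> (\<forall>A. fully_invariant R M A \<longrightarrow> pg_lifting R (quot_mod M A))"
proof -
  interpret rmodule R M using assms(1) by unfold_locales
  have proj_inv: "pg_lifting R (quot_mod M N)" if "projection_invariant R M N" for N
    using quot_pg_lifting[OF assms(2)] projection_invariant_respects_decompositions[OF that] that
    unfolding projection_invariant_def by blast
  have distr: "pg_lifting R (quot_mod M N)" if "mod_distributive R M" "submod R M N" for N
    using quot_pg_lifting[OF assms(2) that(2)] distributive_respects_decompositions[OF that] .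
  have duo: "pg_lifting R (quot_mod M N)" if "duo_module R M" "submod R M N" for N
    using proj_inv fully_invariant_projection_invariant that unfolding duo_module_def by blast
  show ?thesis using proj_inv distr duo fully_invariant_projection_invariant by blast
qed

end
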